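(* Let $\Gamma$ be a 3-colex and $E$ an $X$-type error on the color code on $\Gamma$. For each color $c\in\{r,b,g,y\}$ let $S_c$ be an $X$-stabilizer generator of the 3D toric code on $\Gamma^{*\setminus c}$. Then there is an $X$-stabilizer $S$ of the color code such that $$\partial E+\sum_c\mathrm{supp}(S_c)=\partial(ES),$$ with sums taken mod 2.
   Context: Colors are $\{r,b,g,y\}$. A 3-colex $\Gamma$ is a 3-dimensional cell complex without boundary in which every vertex is 4-valent and lies in exactly four 3-cells, and whose 3-cells are properly 4-colored: every face lies in exactly two 3-cells, which have different colors. The dual complex $\Gamma^*$ has an $i$-cell for every $(3-i)$-cell of $\Gamma$, with incidences reversed; every 3-cell of $\Gamma^*$ is a tetrahedron. A vertex of $\Gamma^*$ is given the color of the corresponding 3-cell of $\Gamma$, so the four vertices of each tetrahedron have distinct colors. A face of $\Gamma^*$ is a $c$-face if none of its vertices has color $c$. The 3D color code on $\Gamma$ has one qubit per tetrahedron $\nu$ of $\Gamma^*$ and $X$-stabilizer generators $B^X_v=\prod_{\nu\ni v}X_\nu$ for vertices $v$ of $\Gamma^*$; its $X$-stabilizers are products of these. The minor complex $\Gamma^{*\setminus c}$ is obtained from $\Gamma^*$ by deleting all vertices of color $c$ together with all edges and faces incident to them; its faces are the $c$-faces of $\Gamma^*$ and its 3-cells are obtained by merging, for each $c$-vertex, the tetrahedra containing it. The 3D toric code on $\Gamma^{*\setminus c}$ has qubits on faces and $X$-stabilizer generators $\prod_{f\in\partial\mu}X_f$ for 3-cells $\mu$. The support of an operator is the mod-2 formal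 sum (set) of cells on which it acts nontrivially. For $E=\prod_{\nu\in\Omega}X_\nu$, $\partial E=\sum_{\nu\in\Omega}\partial\nu$ (mod 2), where $\partial\nu$ is the set of four faces of the tetrahedron $\nu$. *)

theory Defs
  imports Main
begin

datatype color = Red | Blue | Green | Yellow

text \<open>V: vertices of the dual complex (one per 3-cell of the colex), coloured by col;
  F: faces (triangles); T: tetrahedra (3-cells of the dual complex).
  fv f: vertex set of face f; tv t: vertex set of tetrahedron t;
  bd t: the four faces of tetrahedron t.\<close>

definition dual_colex ::
  "'v set \<Rightarrow> 'f set \<Rightarrow> 't set \<Rightarrow> ('v \<Rightarrow> color) \<Rightarrow> ('f \<Rightarrow> 'v set) \<Rightarrow> ('t \<Rightarrow> 'v set)
   \<Rightarrow> ('t \<Rightarrow> 'f set) \<Rightarrow> bool" where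
  "dual_colex V F T col fv tv bd \<longleftrightarrow>
     finite V \<and> finite F \<and> finite T \<and>
     (\<forall>t\<in>T. tv t \<subseteq> V \<and> card (tv t) = 4 \<and> inj_on col (tv t) \<and>
              bd t \<subseteq> F \<and> card (bd t) = 4 \<and> inj_on fv (bd t) \<and>
              (\<forall>f\<in>bd t. fv f \<subseteq> tv t)) \<and>
     (\<forall>f\<in>F. fv f \<subseteq> V \<and> card (fv f) = 3 \<and> card {t\<in>T. f \<in> bd t} = 2) \<and>
     (\<forall>v\<in>V. \<exists>t\<in>T. v \<in> tv t)"

text \<open>Boundary (mod 2) of an X-type operator on the colour code, given by its support
  (a set of tetrahedra): each face counted with multiplicity mod 2.\<close>
definition bdry :: "'f set \<Rightarrow> 't set \<Rightarrow> ('t \<Rightarrow> 'f set) \<Rightarrow> 't set \<Rightarrow> 'f set" where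
  "bdry F T bd \<Omega> = {f\<in>F. odd (card {t\<in>\<Omega> \<inter> T. f \<in> bd t})}"

definition cc_gen_supp :: "'t set \<Rightarrow> ('t \<Rightarrow> 'v set) \<Rightarrow> 'v \<Rightarrow> 't set" where
  "cc_gen_supp T tv v = {t\<in>T. v \<in> tv t}"

definition cc_X_stabilizers :: "'v set \<Rightarrow> 't set \<Rightarrow> ('t \<Rightarrow> 'v set) \<Rightarrow> 't set set" where
  "cc_X_stabilizers V T tv =
     {{t\<in>T. odd (card {v\<in>W. t \<in> cc_gen_supp T tv v})} | W. W \<subseteq> V}"

text \<open>Minor complex without colour c: faces are the c-faces; 3-cells are indexed by
  the c-vertices v (merging of the tetrahedra containing v).\<close>
definition c_faces :: "'f set \<Rightarrow> ('v \<Rightarrow> color) \<Rightarrow> ('f \<Rightarrow> 'v set) \<Rightarrow> color \<Rightarrow> 'f set" where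
  "c_faces F col fv c = {f\<in>F. \<forall>u\<in>fv f. col u \<noteq> c}"

definition minor_cell_bdry ::
  "'f set \<Rightarrow> 't set \<Rightarrow> ('v \<Rightarrow> color) \<Rightarrow> ('f \<Rightarrow> 'v set) \<Rightarrow> ('t \<Rightarrow> 'v set) \<Rightarrow> ('t \<Rightarrow> 'f set)
   \<Rightarrow> color \<Rightarrow> 'v \<Rightarrow> 'f set" where
  "minor_cell_bdry F T col fv tv bd c v =
     {f\<in>c_faces F col fv c. odd (card {t\<in>T. v \<in> tv t \<and> f \<in> bd t})}"

definition toric_X_gens ::
  "'v set \<Rightarrow> 'f set \<Rightarrow> 't set \<Rightarrow> ('v \<Rightarrow> color) \<Rightarrow> ('f \<Rightarrow> 'v set) \<Rightarrow> ('t \<Rightarrow> 'v set)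
   \<Rightarrow> ('t \<Rightarrow> 'f set) \<Rightarrow> color \<Rightarrow> 'f set set" where
  "toric_X_gens V F T col fv tv bd c =
     {minor_cell_bdry F T col fv tv bd c v | v. v \<in> V \<and> col v = c}"

definition sum_mod2 :: "(color \<Rightarrow> 'f set) \<Rightarrow> 'f set" where
  "sum_mod2 A = {f. odd (card {c. f \<in> A c})}"

end

theory Submission
  imports Defs "HOL-Library.Z2"
begin

text \<open>Choose for every colour c a c-vertex v_c whose merged cell has boundary S_c, and let S be
  the product of the colour code generators at these four vertices. The boundary of a generator
  B_v is exactly the boundary of the merged cell of v in the minor complex without colour col v:
  a face through v lies in two tetrahedra, both containing v, so it cancels, and a face of a
  tetrahedron through v that misses v has no vertex of colour col v since the colours of a
  tetrahedron are distinct. The boundary map is additive mod 2, so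
  \<partial>(ES) = \<partial>E + \<partial>S = \<partial>E + \<Sum>_c S_c.\<close>

lemma of_nat_bit_eq_of_bool_odd: "(of_nat n :: bit) = of_bool (odd n)"
  by (induction n) auto

lemma of_bool_add_bit: "of_bool P + of_bool Q = (of_bool (P \<noteq> Q) :: bit)"
  by auto

lemma of_bool_odd_card_filter:
  assumes "finite A"
  shows "of_bool (odd (card {x\<in>A. P x})) = (\<Sum>x\<in>A. of_bool (P x) :: bit)"
proof -
  have "{x\<in>A. P x} = A \<inter> {x. P x}" by blast
  then show ?thesis using assms by (simp add: of_nat_bit_eq_of_bool_odd)
qed

lemma bdry_subset: "bdry F T bd X \<subseteq> F"
  by (auto simp: bdry_def)

lemma of_bool_mem_bdry:
  assumes "finite T" and "f \<in> F"
  shows "of_bool (f \<in> bdry F T bd X) = (\<Sum>t\<in>T. of_bool (t \<in> X \<and> f \<in> bd t) :: bit)"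
proof -
  have "{t\<in>X \<inter> T. f \<in> bd t} = {t\<in>T. t \<in> X \<and> f \<in> bd t}" by blast
  then show ?thesis
    using assms of_bool_odd_card_filter[OF assms(1)] by (simp add: bdry_def)
qed

lemma bdry_symdiff:
  assumes "finite T"
  shows "bdry F T bd ((A - B) \<union> (B - A))
           = (bdry F T bd A - bdry F T bd B) \<union> (bdry F T bd B - bdry F T bd A)"
proof (rule set_eqI)
  fix f
  show "f \<in> bdry F T bd ((A - B) \<union> (B - A))
          \<longleftrightarrow> f \<in> (bdry F T bd A - bdry F T bd B) \<union> (bdry F T bd B - bdry F T bd A)"
  proof (cases "f \<in> F")
    case True
    have "of_bool (f \<in> bdry F T bd ((A - B) \<union> (B - A)))
          = (\<Sum>t\<in>T. of_bool (t \<in> A \<and> f \<in> bd t) + of_bool (t \<in> B \<and> f \<in> bd t) :: bit)"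
      unfolding of_bool_mem_bdry[OF assms True] of_bool_add_bit
      by (intro sum.cong refl arg_cong[where f = of_bool]) blast
    also have "\<dots> = of_bool (f \<in> bdry F T bd A) + of_bool (f \<in> bdry F T bd B)"
      by (simp only: sum.distrib of_bool_mem_bdry[OF assms True])
    also have "\<dots> = of_bool ((f \<in> bdry F T bd A) \<noteq> (f \<in> bdry F T bd B))"
      by (rule of_bool_add_bit)
    finally have "f \<in> bdry F T bd ((A - B) \<union> (B - A))
                    \<longleftrightarrow> (f \<in> bdry F T bd A) \<noteq> (f \<in> bdry F T bd B)"
      by (rule iffD1[OF of_bool_eq_iff])
    then show ?thesis by blast
  next
    case False
    then have "f \<notin> bdry F T bd X" for X
      using bdry_subset[of F T bd X] by blast
    then show ?thesis by simp
  qed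
qed

lemma bdry_odd_sum:
  assumes "finite T" and "finite I"
  shows "bdry F T bd {t\<in>T. odd (card {i\<in>I. t \<in> G i})}
           = {f. odd (card {i\<in>I. f \<in> bdry F T bd (G i)})}"
proof (rule set_eqI)
  fix f
  show "f \<in> bdry F T bd {t\<in>T. odd (card {i\<in>I. t \<in> G i})}
          \<longleftrightarrow> f \<in> {f. odd (card {i\<in>I. f \<in> bdry F T bd (G i)})}"
  proof (cases "f \<in> F")
    case True
    have "of_bool (f \<in> bdry F T bd {t\<in>T. odd (card {i\<in>I. t \<in> G i})})
          = (\<Sum>t\<in>T. (\<Sum>i\<in>I. of_bool (t \<in> G i)) * of_bool (f \<in> bd t) :: bit)"
      unfolding of_bool_mem_bdry[OF assms(1) True] of_bool_odd_card_filter[OF assms(2), symmetric]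
        of_bool_conj[symmetric]
      by (intro sum.cong refl arg_cong[where f = of_bool]) blast
    also have "\<dots> = (\<Sum>i\<in>I. \<Sum>t\<in>T. of_bool (t \<in> G i \<and> f \<in> bd t))"
      by (simp only: sum_distrib_right sum.swap[of _ T] of_bool_conj)
    also have "\<dots> = of_bool (odd (card {i\<in>I. f \<in> bdry F T bd (G i)}))"
      by (simp only: of_bool_mem_bdry[OF assms(1) True] of_bool_odd_card_filter[OF assms(2)])
    finally have "f \<in> bdry F T bd {t\<in>T. odd (card {i\<in>I. t \<in> G i})}
                    \<longleftrightarrow> odd (card {i\<in>I. f \<in> bdry F T bd (G i)})"
      by (rule iffD1[OF of_bool_eq_iff])
    then show ?thesis by simp
  next
    case False
    then have no_bdry: "f \<notin> bdry F T bd X" for X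
      using bdry_subset[of F T bd X] by blast
    then have "{i\<in>I. f \<in> bdry F T bd (G i)} = {}"
      by blast
    then show ?thesis
      using no_bdry by simp
  qed
qed

instance color :: finite
proof
  have "(UNIV :: color set) \<subseteq> {Red, Blue, Green, Yellow}"
    by (auto intro: color.exhaust)
  then show "finite (UNIV :: color set)"
    by (rule finite_subset) simp
qed

lemma bdry_cc_gen_supp:
  assumes "dual_colex V F T col fv tv bd"
  shows "bdry F T bd (cc_gen_supp T tv v) = minor_cell_bdry F T col fv tv bd (col v) v"
proof -
  have face_in_two: "card {t\<in>T. f \<in> bd t} = 2" if "f \<in> F" for f
    using assms that unfolding dual_colex_def by blast
  have face_of_tet: "fv f \<subseteq> tv t" "inj_on col (tv t)" if "t \<in> T" "f \<in> bd t" for t f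
    using assms that unfolding dual_colex_def by blast+
  have "f \<in> c_faces F col fv (col v)"
    if f: "f \<in> F" and odd: "odd (card {t\<in>T. v \<in> tv t \<and> f \<in> bd t})" for f
  proof -
    have "v \<notin> fv f"
    proof
      assume "v \<in> fv f"
      then have "{t\<in>T. v \<in> tv t \<and> f \<in> bd t} = {t\<in>T. f \<in> bd t}"
        using face_of_tet by blast
      then show False using odd face_in_two[OF f] by simp
    qed
    moreover obtain t where t: "t \<in> T" "v \<in> tv t" "f \<in> bd t"
      using odd by (metis (no_types, lifting) card.empty empty_Collect_eq odd_card_imp_not_empty)
    ultimately show ?thesis
      using f face_of_tet[OF t(1,3)] t(2) by (auto simp: c_faces_def inj_on_def)
  qed
  moreover have "c_faces F col fv (col v) \<subseteq> F"
    by (auto simp: c_faces_def)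
  moreover have "{t\<in>cc_gen_supp T tv v \<inter> T. f \<in> bd t} = {t\<in>T. v \<in> tv t \<and> f \<in> bd t}" for f
    by (auto simp: cc_gen_supp_def)
  ultimately show ?thesis
    unfolding bdry_def minor_cell_bdry_def by auto
qed

theorem lemma9:
  fixes V :: "'v set" and F :: "'f set" and T :: "'t set"
    and col :: "'v \<Rightarrow> color" and fv :: "'f \<Rightarrow> 'v set" and tv :: "'t \<Rightarrow> 'v set"
    and bd :: "'t \<Rightarrow> 'f set" and E :: "'t set" and Sc :: "color \<Rightarrow> 'f set"
  assumes "dual_colex V F T col fv tv bd"
    and "E \<subseteq> T"
    and "\<forall>c. Sc c \<in> toric_X_gens V F T col fv tv bd c"
  shows "\<exists>S\<in>cc_X_stabilizers V T tv.
           bdry F T bd E \<union> sum_mod2 Sc - (bdry F T bd E \<inter> sum_mod2 Sc)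
           = bdry F T bd ((E - S) \<union> (S - E))"
proof -
  have "finite T" using assms(1) by (simp add: dual_colex_def)
  have "\<forall>c. \<exists>w. w \<in> V \<and> col w = c \<and> Sc c = minor_cell_bdry F T col fv tv bd c w"
    using assms(3) unfolding toric_X_gens_def by blast
  then obtain v where v: "\<And>c. v c \<in> V" "\<And>c. col (v c) = c"
    and Sc_v: "\<And>c. Sc c = minor_cell_bdry F T col fv tv bd c (v c)"
    by metis
  define S where "S = {t\<in>T. odd (card {c. t \<in> cc_gen_supp T tv (v c)})}"
  have "inj v" by (metis injI v(2))
  have "{w\<in>range v. t \<in> cc_gen_supp T tv w} = v ` {c. t \<in> cc_gen_supp T tv (v c)}" for t
    by auto
  then have "S = {t\<in>T. odd (card {w\<in>range v. t \<in> cc_gen_supp T tv w})}"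
    using \<open>inj v\<close> by (simp add: S_def card_image inj_on_subset[of v UNIV])
  then have "S \<in> cc_X_stabilizers V T tv"
    using v(1) unfolding cc_X_stabilizers_def by blast
  moreover have "Sc c = bdry F T bd (cc_gen_supp T tv (v c))" for c
    using bdry_cc_gen_supp[OF assms(1), of "v c"] Sc_v v(2) by simp
  then have "bdry F T bd S = sum_mod2 Sc"
    using bdry_odd_sum[OF \<open>finite T\<close> finite_UNIV, where G = "\<lambda>c. cc_gen_supp T tv (v c)"]
    by (simp add: S_def sum_mod2_def)
  ultimately show ?thesis
    using bdry_symdiff[OF \<open>finite T\<close>, of F bd E S] by blast
qed

end
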